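(* Let $m>1$ be an odd integer. If $\mathbf{u}_1,\mathbf{u}_2$ are units of $H_{1,2,2}$ with $\mathbf{u}_1-\mathbf{u}_2\in mH_{1,2,2}$, then $\mathbf{u}_1=\mathbf{u}_2$.
   Context: Let $\mathbf{i},\mathbf{j},\mathbf{k}$ be the standard quaternion units. $H_{1,2,2}$ is the subring of the quaternions equal to the $\mathbb{Z}$-module generated by $\mathbf{v}_1=1$, $\mathbf{v}_2=\mathbf{i}$, $\mathbf{v}_3=\tfrac12(1+\mathbf{i}+\sqrt2\,\mathbf{j})$, $\mathbf{v}_4=\tfrac12(1+\mathbf{i}+\sqrt2\,\mathbf{k})$. A unit is an element invertible in $H_{1,2,2}$ (equivalently of quaternion norm 1). *)

theory Defs
  imports Complex_Main
begin

datatype quat = Quat (qre: real) (qi: real) (qj: real) (qk: real)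

definition qadd :: "quat \<Rightarrow> quat \<Rightarrow> quat" where
  "qadd x y = Quat (qre x + qre y) (qi x + qi y) (qj x + qj y) (qk x + qk y)"

definition qsub :: "quat \<Rightarrow> quat \<Rightarrow> quat" where
  "qsub x y = Quat (qre x - qre y) (qi x - qi y) (qj x - qj y) (qk x - qk y)"

definition qscale :: "real \<Rightarrow> quat \<Rightarrow> quat" where
  "qscale r x = Quat (r * qre x) (r * qi x) (r * qj x) (r * qk x)"

definition qmul :: "quat \<Rightarrow> quat \<Rightarrow> quat" where
  "qmul x y = Quat
     (qre x * qre y - qi x * qi y - qj x * qj y - qk x * qk y)
     (qre x * qi y + qi x * qre y + qj x * qk y - qk x * qj y)
     (qre x * qj y - qi x * qk y + qj x * qre y + qk x * qi y)
     (qre x * qk y + qi x * qj y - qj x * qi y + qk x * qre y)"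

definition qone :: quat where "qone = Quat 1 0 0 0"

definition v1 :: quat where "v1 = Quat 1 0 0 0"
definition v2 :: quat where "v2 = Quat 0 1 0 0"
definition v3 :: quat where "v3 = Quat (1/2) (1/2) (sqrt 2 / 2) 0"
definition v4 :: quat where "v4 = Quat (1/2) (1/2) 0 (sqrt 2 / 2)"

definition H122 :: "quat set" where
  "H122 = {qadd (qadd (qscale (of_int a) v1) (qscale (of_int b) v2))
                (qadd (qscale (of_int c) v3) (qscale (of_int d) v4))
           | a b c d :: int. True}"

definition H122_unit :: "quat \<Rightarrow> bool" where
  "H122_unit u \<longleftrightarrow> u \<in> H122 \<and> (\<exists>v\<in>H122. qmul u v = qone \<and> qmul v u = qone)"

definition mult_H122 :: "int \<Rightarrow> quat set" where
  "mult_H122 m = {qscale (of_int m) h | h. h \<in> H122}"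

end

theory Submission
  imports Defs
begin

text \<open>The reduced norm of a unit is 1, and the norm of an element of \<open>H122\<close> is a
  non-negative integer. If \<open>u\<^sub>1 - u\<^sub>2 = m h\<close> with \<open>h \<in> H122\<close>, then
  \<open>m\<^sup>2 N(h) = N(u\<^sub>1 - u\<^sub>2) \<le> 2 N(u\<^sub>1) + 2 N(u\<^sub>2) = 4\<close>; an odd \<open>m > 1\<close> has \<open>m\<^sup>2 \<ge> 9\<close>,
  so \<open>N(h) = 0\<close> and \<open>h = 0\<close>.\<close>

definition qnorm :: "quat \<Rightarrow> real" where
  "qnorm x = qre x ^ 2 + qi x ^ 2 + qj x ^ 2 + qk x ^ 2"

lemma qnorm_nonneg: "qnorm x \<ge> 0"
  unfolding qnorm_def by simp

lemma qnorm_eq_0_iff: "qnorm x = 0 \<longleftrightarrow> x = Quat 0 0 0 0"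
  unfolding qnorm_def by (cases x) (simp add: add_nonneg_eq_0_iff)

lemma qnorm_qmul: "qnorm (qmul x y) = qnorm x * qnorm y"
  unfolding qnorm_def qmul_def by (simp add: power2_eq_square algebra_simps)

lemma qnorm_qscale: "qnorm (qscale r x) = r\<^sup>2 * qnorm x"
  unfolding qnorm_def qscale_def by (simp add: power_mult_distrib algebra_simps)

lemma qnorm_qsub_le: "qnorm (qsub x y) \<le> 2 * qnorm x + 2 * qnorm y"
proof -
  have sq: "(a - b)\<^sup>2 \<le> 2 * a\<^sup>2 + 2 * b\<^sup>2" for a b :: real
    using zero_le_power2[of "a + b"] by (simp add: power2_eq_square algebra_simps)
  show ?thesis
    unfolding qnorm_def qsub_def
    using sq[of "qre x" "qre y"] sq[of "qi x" "qi y"] sq[of "qj x" "qj y"] sq[of "qk x" "qk y"]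
    by simp
qed

lemma qsub_eq_0_iff: "qsub x y = Quat 0 0 0 0 \<longleftrightarrow> x = y"
  unfolding qsub_def by (cases x, cases y) simp

lemma qnorm_H122:
  fixes a b c d :: int
  shows "qnorm (qadd (qadd (qscale (of_int a) v1) (qscale (of_int b) v2))
                     (qadd (qscale (of_int c) v3) (qscale (of_int d) v4)))
         = of_int (a\<^sup>2 + b\<^sup>2 + (a + b) * (c + d) + c\<^sup>2 + c * d + d\<^sup>2)"
proof -
  have "sqrt 2 * sqrt 2 = (2::real)" by simp
  then show ?thesis
    unfolding qnorm_def qadd_def qscale_def v1_def v2_def v3_def v4_def
    by (simp add: power2_eq_square algebra_simps)
qed

lemma qnorm_in_Ints_if_H122: "x \<in> H122 \<Longrightarrow> qnorm x \<in> \<int>"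
  unfolding H122_def by (auto simp: qnorm_H122)

lemma qnorm_H122_unit:
  assumes "H122_unit u"
  shows "qnorm u = 1"
proof -
  obtain v where "u \<in> H122" "v \<in> H122" "qmul u v = qone"
    using assms unfolding H122_unit_def by blast
  then obtain n k :: int where n: "qnorm u = of_int n" and k: "qnorm v = of_int k"
    by (metis Ints_cases qnorm_in_Ints_if_H122)
  have "qnorm u * qnorm v = 1"
    using qnorm_qmul[of u v] \<open>qmul u v = qone\<close> by (simp add: qone_def qnorm_def)
  then have "n * k = 1"
    using n k by (metis of_int_eq_1_iff of_int_mult)
  moreover have "n \<ge> 0"
    using n qnorm_nonneg[of u] by simp
  ultimately show ?thesis
    using n pos_zmult_eq_1_iff_lemma[of n k] by auto
qed

lemma H122_unit_eq_if_diff_multiple: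
  fixes m :: int
  assumes "\<bar>m\<bar> > 2" and "H122_unit u1" and "H122_unit u2"
    and "h \<in> H122" and "qsub u1 u2 = qscale (of_int m) h"
  shows "u1 = u2"
proof -
  obtain n :: int where n: "qnorm h = of_int n"
    using qnorm_in_Ints_if_H122[OF \<open>h \<in> H122\<close>] Ints_cases by blast
  have "of_int (m\<^sup>2 * n) = qnorm (qsub u1 u2)"
    using n by (simp add: assms(5) qnorm_qscale)
  also have "\<dots> \<le> 4"
    using qnorm_qsub_le[of u1 u2] qnorm_H122_unit assms(2,3) by simp
  finally have "m\<^sup>2 * n \<le> 4"
    by linarith
  moreover have "m\<^sup>2 \<ge> 9"
    using assms(1) power_mono[of 3 "\<bar>m\<bar>" 2] by simp
  moreover have "n \<ge> 0"
    using n qnorm_nonneg[of h] by simp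
  ultimately have "9 * n \<le> 4"
    using mult_right_mono[of 9 "m\<^sup>2" n] by linarith
  then have "n = 0"
    using \<open>n \<ge> 0\<close> by linarith
  then have "h = Quat 0 0 0 0"
    using n qnorm_eq_0_iff by simp
  then show ?thesis
    using assms(5) qsub_eq_0_iff by (simp add: qscale_def)
qed

theorem lemma33:
  fixes m :: int and u1 u2 :: quat
  assumes "m > 1" and "odd m"
    and "H122_unit u1" and "H122_unit u2"
    and "qsub u1 u2 \<in> mult_H122 m"
  shows "u1 = u2"
proof -
  obtain h where "h \<in> H122" "qsub u1 u2 = qscale (of_int m) h"
    using assms(5) unfolding mult_H122_def by blast
  moreover have "\<bar>m\<bar> > 2"
    using assms(1,2) by presburger
  ultimately show ?thesis
    using H122_unit_eq_if_diff_multiple assms(3,4) by blast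
qed

end
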